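(* Let $\lambda_1\ge\lambda_2\ge 2$ and $h_1\ge h_2\ge2$ be integers, let $h_1\le m\le h_1+h_2+\lambda_2-3$, and set $m'=\lambda_1+\lambda_2+h_1+h_2-3-m$. Then $$\frac{\lambda_1-\lambda_2+1}{m-h_2+1}\binom{\lambda_1+h_1-2}{m-h_2}\binom{\lambda_2+h_1-3}{m-h_2}\binom{m-h_2}{m-h_1}\binom{\lambda_2+h_2-4}{h_2-2}\binom{\lambda_1+h_2-3}{h_2-2}\frac{1}{\binom{h_1-1}{h_2-2}}$$ $$=\frac{h_1-h_2+1}{m'-\lambda_2+1}\binom{h_1+\lambda_1-2}{m'-\lambda_2}\binom{h_2+\lambda_1-3}{m'-\lambda_2}\binom{m'-\lambda_2}{m'-\lambda_1}\binom{h_1+\lambda_2-3}{\lambda_2-2}\binom{h_2+\lambda_2-4}{\lambda_2-2}\frac{1}{\binom{\lambda_1-1}{\lambda_2-2}}.$$ *)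

theory Defs
  imports Complex_Main
begin

end

theory Submission
  imports Defs
begin

text \<open>
  Substitute \<open>a = \<lambda>\<^sub>2 - 2\<close>, \<open>b = h\<^sub>2 - 2\<close>, \<open>x = \<lambda>\<^sub>1 - \<lambda>\<^sub>2\<close>, \<open>y = h\<^sub>1 - h\<^sub>2\<close>,
  \<open>k = m - h\<^sub>1\<close> and \<open>j = m' - \<lambda>\<^sub>1\<close>, all natural numbers with \<open>k + j = a + b + 1\<close>.
  Exchanging \<open>(\<lambda>, m)\<close> with \<open>(h, m')\<close> becomes the swap \<open>(a, x, k) \<leftrightarrow> (b, y, j)\<close>.
  Writing every binomial coefficient as a quotient of factorials, each side collapses to
  the same quotient, which is visibly invariant under this swap.
\<close>

definition binomial_product :: "nat \<Rightarrow> nat \<Rightarrow> nat \<Rightarrow> nat \<Rightarrow> nat \<Rightarrow> real" where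
  "binomial_product a b x y k =
     real (x + 1) / real (y + k + 1)
     * real ((a + x + b + y + 2) choose (y + k)) * real ((a + b + y + 1) choose (y + k))
     * real ((y + k) choose k) * real ((a + b) choose b) * real ((a + x + b + 1) choose b)
     * (1 / real ((b + y + 1) choose b))"

definition factorial_quotient :: "nat \<Rightarrow> nat \<Rightarrow> nat \<Rightarrow> nat \<Rightarrow> nat \<Rightarrow> nat \<Rightarrow> real" where
  "factorial_quotient a b x y k j =
     real (x + 1) * real (y + 1)
     * fact (a + x + b + y + 2) * fact (a + b + y + 1) * fact (a + b) * fact (a + x + b + 1)
     / (fact (y + k + 1) * fact (x + j + 1) * fact j * fact k
        * fact a * fact b * fact (a + x + 1) * fact (b + y + 1))"

lemma factorial_quotient_swap:
  "factorial_quotient b a y x j k = factorial_quotient a b x y k j"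
  unfolding factorial_quotient_def by (simp add: ac_simps)

lemma real_binomial_eq_fact_div:
  "n = p + q \<Longrightarrow> real (n choose p) = fact n / (fact p * fact q)"
  by (simp add: binomial_fact)

lemma binomial_product_eq_factorial_quotient:
  assumes "k + j = a + b + 1"
  shows "binomial_product a b x y k = factorial_quotient a b x y k j"
proof -
  have "real ((a + x + b + y + 2) choose (y + k)) = fact (a + x + b + y + 2) / (fact (y + k) * fact (x + j + 1))"
    and "real ((a + b + y + 1) choose (y + k)) = fact (a + b + y + 1) / (fact (y + k) * fact j)"
    by (rule real_binomial_eq_fact_div, use assms in simp)+
  moreover have "real ((y + k) choose k) = fact (y + k) / (fact k * fact y)"
    and "real ((a + b) choose b) = fact (a + b) / (fact b * fact a)"
    and "real ((a + x + b + 1) choose b) = fact (a + x + b + 1) / (fact b * fact (a + x + 1))"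
    and "real ((b + y + 1) choose b) = fact (b + y + 1) / (fact b * fact (y + 1))"
    by (simp_all add: real_binomial_eq_fact_div)
  moreover have "(fact (y + k + 1) :: real) = real (y + k + 1) * fact (y + k)"
    and "(fact (y + 1) :: real) = real (y + 1) * fact y"
    by (simp_all flip: of_nat_Suc)
  moreover have "real (y + k + 1) \<noteq> 0" "real (y + 1) \<noteq> 0"
    by simp_all
  \<comment> \<open>The deleted rules would unfold factorials of sums and make \<open>field_simps\<close> blow up.\<close>
  ultimately show ?thesis
    unfolding binomial_product_def factorial_quotient_def
    by (simp only:) (simp add: field_simps del: of_nat_add of_nat_Suc fact_Suc add_2_eq_Suc' add_2_eq_Suc)
qed

lemma binomial_product_swap:
  assumes "k + j = a + b + 1"
  shows "binomial_product a b x y k = binomial_product b a y x j"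
proof -
  have "j + k = b + a + 1"
    using assms by simp
  then show ?thesis
    using binomial_product_eq_factorial_quotient[OF assms, of x y]
      binomial_product_eq_factorial_quotient[of j k b a y x]
    by (simp add: factorial_quotient_swap)
qed

theorem proposition4p2:
  fixes l1 l2 h1 h2 m m' :: int
  assumes "l1 \<ge> l2" and "l2 \<ge> 2" and "h1 \<ge> h2" and "h2 \<ge> 2"
    and "h1 \<le> m" and "m \<le> h1 + h2 + l2 - 3"
    and "m' = l1 + l2 + h1 + h2 - 3 - m"
  shows "real_of_int (l1 - l2 + 1) / real_of_int (m - h2 + 1)
           * real (nat (l1 + h1 - 2) choose nat (m - h2))
           * real (nat (l2 + h1 - 3) choose nat (m - h2))
           * real (nat (m - h2) choose nat (m - h1))
           * real (nat (l2 + h2 - 4) choose nat (h2 - 2))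
           * real (nat (l1 + h2 - 3) choose nat (h2 - 2))
           * (1 / real (nat (h1 - 1) choose nat (h2 - 2)))
       = real_of_int (h1 - h2 + 1) / real_of_int (m' - l2 + 1)
           * real (nat (h1 + l1 - 2) choose nat (m' - l2))
           * real (nat (h2 + l1 - 3) choose nat (m' - l2))
           * real (nat (m' - l2) choose nat (m' - l1))
           * real (nat (h1 + l2 - 3) choose nat (l2 - 2))
           * real (nat (h2 + l2 - 4) choose nat (l2 - 2))
           * (1 / real (nat (l1 - 1) choose nat (l2 - 2)))"
proof -
  define a where "a = nat (l2 - 2)"
  define b where "b = nat (h2 - 2)"
  define x where "x = nat (l1 - l2)"
  define y where "y = nat (h1 - h2)"
  define k where "k = nat (m - h1)"
  define j where "j = nat (m' - l1)"
  have kj: "k + j = a + b + 1"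
    using assms unfolding a_def b_def k_def j_def by simp
  have "nat (l1 + h1 - 2) = a + x + b + y + 2" "nat (m - h2) = y + k"
    "nat (l2 + h1 - 3) = a + b + y + 1" "nat (m - h1) = k" "nat (l2 + h2 - 4) = a + b"
    "nat (h2 - 2) = b" "nat (l1 + h2 - 3) = a + x + b + 1" "nat (h1 - 1) = b + y + 1"
    "real_of_int (l1 - l2 + 1) = real (x + 1)" "real_of_int (m - h2 + 1) = real (y + k + 1)"
    "nat (h1 + l1 - 2) = b + y + a + x + 2" "nat (m' - l2) = x + j"
    "nat (h2 + l1 - 3) = b + a + x + 1" "nat (m' - l1) = j" "nat (h1 + l2 - 3) = b + y + a + 1"
    "nat (l2 - 2) = a" "nat (h2 + l2 - 4) = b + a" "nat (l1 - 1) = a + x + 1"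
    "real_of_int (h1 - h2 + 1) = real (y + 1)" "real_of_int (m' - l2 + 1) = real (x + j + 1)"
    using assms unfolding a_def b_def x_def y_def k_def j_def by simp_all
  with binomial_product_swap[OF kj, of x y] show ?thesis
    unfolding binomial_product_def by (simp only: ac_simps)
qed

end
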